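(* Let $A=(\{0,1\},f_c,f_d)$ be the self-similar cellular automaton with $f_c(x,y,z)=f_d(x,y,z)=z$ for all $x,y,z\in\{0,1\}$ (the left shift). Then for every initial configuration $c:\mathbb{Z}\to\{0,1\}$ and every $b\in\{0,1\}$ there exists an evolution $s$ of $A$ from $c$ with $s(0,1)=b$. In particular the state of cell $0$ during the time interval $[1,2)$ is not deterministic, for any initial configuration.
   Context: A self-similar cellular automaton is a triple $A=(S,f_c,f_d)$ with $S$ a finite set of states and $f_c,f_d:S^3\to S$. Cells are indexed by $j\in\mathbb{Z}$; cell $j$ has cycles $[k/2^j,(k+1)/2^j)$, and the $k$-th cycle of cell $j$ is identified with the pair $(j,k)$. The automaton is started at time $0$; the set of cycles is $C=\{(i,k): i\in\mathbb{Z},\ k\in\mathbb{Z}_{\ge 0}\}$. Given an initial configuration $c:\mathbb{Z}\to S$, an evolution of $A$ from $c$ is a map $s:C\to S$ with $s(i,0)=c(i)$ for all $i$ and, for all $(i,k)$ with $k\ge1$, $s(i,k)=f_c\big(s(i-1,\lfloor (k-1)/2\rfloor),s(i,k-1),s(i+1,2k-1)\big)$ if $k$ is even and $s(i,k)=f_d(\text{same arguments})$ if $k$ is odd. The cycle $(0,1)$ is the state of cell $0$ during $[1,2)$. *)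

theory Defs
  imports Main
begin

text \<open>Cycles are pairs (i,k) with i an integer cell index and k a natural cycle number.
  s is an evolution from the initial configuration c.\<close>

definition is_evolution ::
  "('a \<Rightarrow> 'a \<Rightarrow> 'a \<Rightarrow> 'a) \<Rightarrow> ('a \<Rightarrow> 'a \<Rightarrow> 'a \<Rightarrow> 'a) \<Rightarrow> (int \<Rightarrow> 'a) \<Rightarrow> (int \<Rightarrow> nat \<Rightarrow> 'a) \<Rightarrow> bool"
where
  "is_evolution fc fd c s \<longleftrightarrow>
     (\<forall>i. s i 0 = c i) \<and>
     (\<forall>i k. k \<ge> 1 \<longrightarrow>
        s i k = (if even k then fc else fd)
                  (s (i - 1) ((k - 1) div 2)) (s i (k - 1)) (s (i + 1) (2 * k - 1)))"

definition shift_rule :: "bool \<Rightarrow> bool \<Rightarrow> bool \<Rightarrow> bool" where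
  "shift_rule x y z = z"

end

theory Submission
  imports Defs
begin

(* For the left-shift automaton both local rules return their
   third argument, so the evolution equations reduce to
       s(i,k) = s(i+1, 2k-1)        for k >= 1,
   i.e. every cycle after time 0 copies a cycle of the right neighbour that
   again lies after time 0.  These equations never reach back to the initial
   configuration, so they impose no constraint linking times >= 1 to time 0.
   In particular, keeping the initial configuration at time 0 and putting one
   arbitrary value v into every later cycle yields an evolution. *)

lemma shift_evolution_iff:
  fixes c :: "int \<Rightarrow> 'a" and s :: "int \<Rightarrow> nat \<Rightarrow> 'a"
  shows "is_evolution (\<lambda>x y z. z) (\<lambda>x y z. z) c s \<longleftrightarrow>
           (\<forall>i. s i 0 = c i) \<and> (\<forall>i k. k \<ge> 1 \<longrightarrow> s i k = s (i + 1) (2 * k - 1))"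
  unfolding is_evolution_def by simp

definition constant_continuation :: "(int \<Rightarrow> 'a) \<Rightarrow> 'a \<Rightarrow> int \<Rightarrow> nat \<Rightarrow> 'a" where
  "constant_continuation c v i k = (if k = 0 then c i else v)"

text \<open>Every constant continuation is an evolution of the shift automaton: the
  copied cycle 2k-1 is again positive, so both sides of each equation are v.\<close>

lemma constant_continuation_is_shift_evolution:
  fixes c :: "int \<Rightarrow> 'a" and v :: 'a
  shows "is_evolution (\<lambda>x y z. z) (\<lambda>x y z. z) c (constant_continuation c v)"
proof -
  have "constant_continuation c v i k = constant_continuation c v (i + 1) (2 * k - 1)"
    if "k \<ge> 1" for i k
  proof -
    have "2 * k - 1 \<noteq> 0" using that by simp
    with that show ?thesis by (simp add: constant_continuation_def)
  qed
  then show ?thesis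
    by (simp add: shift_evolution_iff constant_continuation_def)
qed

theorem mainTheorem2:
  fixes c :: "int \<Rightarrow> bool" and b :: bool
  shows "\<exists>s. is_evolution shift_rule shift_rule c s \<and> s 0 1 = b"
proof (intro exI conjI)
  have "shift_rule = (\<lambda>x y z. z)"
    by (simp add: fun_eq_iff shift_rule_def)
  then show "is_evolution shift_rule shift_rule c (constant_continuation c b)"
    using constant_continuation_is_shift_evolution[of c b] by (simp only:)
  show "constant_continuation c b 0 1 = b"
    by (simp add: constant_continuation_def)
qed

end
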